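(* For any trace-free statistical structure $(g,\nabla)$ on $M$ and any $g$-orthonormal frame $e_1,\dots,e_n$ at a point, $$\sum_{i,j=1}^n\nabla^2g(e_i,e_i,e_j,e_j)=g(\nabla g,\nabla g).$$
   Context: A statistical structure is a pair $(g,\nabla)$, $g$ a positive definite Riemannian metric, $\nabla$ torsion-free with $(\nabla_X g)(Y,Z)=(\nabla_Y g)(X,Z)$; it is trace-free if $\nabla\nu_g=0$ ($\nu_g$ the Riemannian volume form). Here $\nabla g(X,Y,Z)=(\nabla_Xg)(Y,Z)$, $\nabla^2g(X,Y,Z,W)=(\nabla_X(\nabla g))(Y,Z,W)$, and $g(\nabla g,\nabla g)=\sum_{i,j,k}\nabla g(e_i,e_j,e_k)^2$. *)

theory Defs
  imports "HOL-Analysis.Analysis"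
begin

text \<open>Local (chart) description of a statistical structure on an open set U of R^n.
  Tangent vectors at a point are vectors in real^'n; the coordinate vector fields are
  axis i 1.  The metric is given by components G x i j = g(d_i,d_j) and the connection by
  Christoffel symbols Gam x i j l, meaning nabla_{d_i} d_j = sum_l Gam x i j l d_l.\<close>

definition pd :: "'n::finite \<Rightarrow> (real^'n \<Rightarrow> real) \<Rightarrow> real^'n \<Rightarrow> real" where
  "pd i f x = frechet_derivative f (at x) (axis i 1)"

text \<open>Components of nabla g: (nabla g)_{ijk} = (nabla_{d_i} g)(d_j,d_k).\<close>
definition nabla_g ::
  "(real^'n \<Rightarrow> 'n::finite \<Rightarrow> 'n \<Rightarrow> real) \<Rightarrow> (real^'n \<Rightarrow> 'n \<Rightarrow> 'n \<Rightarrow> 'n \<Rightarrow> real)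
    \<Rightarrow> real^'n \<Rightarrow> 'n \<Rightarrow> 'n \<Rightarrow> 'n \<Rightarrow> real" where
  "nabla_g G Gam x i j k =
     pd i (\<lambda>y. G y j k) x
     - (\<Sum>l\<in>UNIV. Gam x i j l * G x l k)
     - (\<Sum>l\<in>UNIV. Gam x i k l * G x j l)"

text \<open>Components of nabla^2 g: (nabla^2 g)_{hijk} = (nabla_{d_h}(nabla g))(d_i,d_j,d_k).\<close>
definition nabla2_g ::
  "(real^'n \<Rightarrow> 'n::finite \<Rightarrow> 'n \<Rightarrow> real) \<Rightarrow> (real^'n \<Rightarrow> 'n \<Rightarrow> 'n \<Rightarrow> 'n \<Rightarrow> real)
    \<Rightarrow> real^'n \<Rightarrow> 'n \<Rightarrow> 'n \<Rightarrow> 'n \<Rightarrow> 'n \<Rightarrow> real" where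
  "nabla2_g G Gam x h i j k =
     pd h (\<lambda>y. nabla_g G Gam y i j k) x
     - (\<Sum>l\<in>UNIV. Gam x h i l * nabla_g G Gam x l j k)
     - (\<Sum>l\<in>UNIV. Gam x h j l * nabla_g G Gam x i l k)
     - (\<Sum>l\<in>UNIV. Gam x h k l * nabla_g G Gam x i j l)"

definition ev2 :: "('n::finite \<Rightarrow> 'n \<Rightarrow> real) \<Rightarrow> real^'n \<Rightarrow> real^'n \<Rightarrow> real" where
  "ev2 T X Y = (\<Sum>i\<in>UNIV. \<Sum>j\<in>UNIV. X$i * Y$j * T i j)"

definition ev3 :: "('n::finite \<Rightarrow> 'n \<Rightarrow> 'n \<Rightarrow> real) \<Rightarrow> real^'n \<Rightarrow> real^'n \<Rightarrow> real^'n \<Rightarrow> real" where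
  "ev3 T X Y Z = (\<Sum>i\<in>UNIV. \<Sum>j\<in>UNIV. \<Sum>k\<in>UNIV. X$i * Y$j * Z$k * T i j k)"

definition ev4 :: "('n::finite \<Rightarrow> 'n \<Rightarrow> 'n \<Rightarrow> 'n \<Rightarrow> real)
    \<Rightarrow> real^'n \<Rightarrow> real^'n \<Rightarrow> real^'n \<Rightarrow> real^'n \<Rightarrow> real" where
  "ev4 T W X Y Z = (\<Sum>h\<in>UNIV. \<Sum>i\<in>UNIV. \<Sum>j\<in>UNIV. \<Sum>k\<in>UNIV.
      W$h * X$i * Y$j * Z$k * T h i j k)"

text \<open>Metric matrix and the density of the Riemannian volume form
  nu_g = sqrt(det g) dx^1 \<and> ... \<and> dx^n.\<close>
definition gmat :: "(real^'n \<Rightarrow> 'n::finite \<Rightarrow> 'n \<Rightarrow> real) \<Rightarrow> real^'n \<Rightarrow> real^'n^'n" where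
  "gmat G x = (\<chi> i j. G x i j)"

definition vol_density :: "(real^'n \<Rightarrow> 'n::finite \<Rightarrow> 'n \<Rightarrow> real) \<Rightarrow> real^'n \<Rightarrow> real" where
  "vol_density G x = sqrt (det (gmat G x))"

definition statistical_structure ::
  "(real^'n) set \<Rightarrow> (real^'n \<Rightarrow> 'n::finite \<Rightarrow> 'n \<Rightarrow> real) \<Rightarrow> (real^'n \<Rightarrow> 'n \<Rightarrow> 'n \<Rightarrow> 'n \<Rightarrow> real) \<Rightarrow> bool"
  where
  "statistical_structure U G Gam \<longleftrightarrow>
     open U \<and>
     \<comment> \<open>regularity: g of class (at least) twice differentiable, nabla differentiable\<close>
     (\<forall>x\<in>U. \<forall>j k. (\<lambda>y. G y j k) differentiable (at x)) \<and>
     (\<forall>x\<in>U. \<forall>i j k. (\<lambda>y. pd i (\<lambda>z. G z j k) y) differentiable (at x)) \<and>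
     (\<forall>x\<in>U. \<forall>i j l. (\<lambda>y. Gam y i j l) differentiable (at x)) \<and>
     \<comment> \<open>g is a positive definite Riemannian metric\<close>
     (\<forall>x\<in>U. \<forall>i j. G x i j = G x j i) \<and>
     (\<forall>x\<in>U. \<forall>v::real^'n. v \<noteq> 0 \<longrightarrow> ev2 (G x) v v > 0) \<and>
     \<comment> \<open>nabla is torsion-free\<close>
     (\<forall>x\<in>U. \<forall>i j l. Gam x i j l = Gam x j i l) \<and>
     \<comment> \<open>Codazzi condition (nabla_X g)(Y,Z) = (nabla_Y g)(X,Z)\<close>
     (\<forall>x\<in>U. \<forall>i j k. nabla_g G Gam x i j k = nabla_g G Gam x j i k)"

text \<open>Trace-free: nabla nu_g = 0.  In coordinates,
  nabla_{d_i} (f dx^1\<and>...\<and>dx^n) = (d_i f - f * sum_l Gam^l_{il}) dx^1\<and>...\<and>dx^n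
  with f the density of nu_g.\<close>
definition trace_free ::
  "(real^'n) set \<Rightarrow> (real^'n \<Rightarrow> 'n::finite \<Rightarrow> 'n \<Rightarrow> real) \<Rightarrow> (real^'n \<Rightarrow> 'n \<Rightarrow> 'n \<Rightarrow> 'n \<Rightarrow> real) \<Rightarrow> bool"
  where
  "trace_free U G Gam \<longleftrightarrow>
     (\<forall>x\<in>U. \<forall>i. pd i (vol_density G) x - vol_density G x * (\<Sum>l\<in>UNIV. Gam x i l l) = 0)"

end

(*
  Write C = nabla g, so C_ijk = (nabla_i g)(d_j, d_k), and g^jk for the inverse metric.
  By Jacobi's formula for the derivative of det g, the condition nabla nu_g = 0 says exactly
  that g^jk C_ijk = 0 for every i. Differentiating this identity in the direction d_h and
  using nabla_h g^-1 = - g^-1 (nabla_h g) g^-1 gives g^jk (nabla^2 g)_hijk = g^mj g^nk C_hmn C_ijk.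
  For a g-orthonormal frame the sum of e_a (x) e_a is g^-1, so the two frame sums of the theorem
  are the full contractions g^hi g^jk (nabla^2 g)_hijk and g^hi g^mj g^nk C_hmn C_ijk, which
  agree by the previous identity. Apart from symmetry and nondegeneracy of g only nabla nu_g = 0
  is used: neither torsion-freeness nor the Codazzi condition plays a role.
*)
theory Submission
  imports Defs
begin

lemma pd_eqI: "(f has_derivative f') (at x) \<Longrightarrow> pd i f x = f' (axis i 1)"
  unfolding pd_def by (metis frechet_derivative_at)

lemma pd_cong_open:
  assumes "open U" "x \<in> U" "\<And>y. y \<in> U \<Longrightarrow> f y = g y"
  shows "pd i f x = pd i g x"
proof -
  have "(f has_derivative D) (at x) \<longleftrightarrow> (g has_derivative D) (at x)" for D
    using has_derivative_transform_within_open[OF _ assms(1,2)] assms(3) by metis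
  then show ?thesis
    unfolding pd_def frechet_derivative_def by simp
qed

lemma pd_const: "pd i (\<lambda>y. c::real) x = 0"
  by (metis pd_eqI has_derivative_const)

lemma pd_locally_const:
  assumes "open U" "x \<in> U" "\<And>y. y \<in> U \<Longrightarrow> f y = c"
  shows "pd i f x = 0"
  using pd_cong_open[OF assms] pd_const by simp

lemma pd_sum:
  assumes "\<And>s. s \<in> S \<Longrightarrow> f s differentiable (at x)"
  shows "pd i (\<lambda>y. \<Sum>s\<in>S. f s y) x = (\<Sum>s\<in>S. pd i (f s) x)"
  unfolding pd_def
  by (rule pd_eqI[unfolded pd_def, OF has_derivative_sum]) (use assms frechet_derivative_works in blast)

lemma pd_mult:
  fixes f g :: "real^'n::finite \<Rightarrow> real"
  assumes "f differentiable (at x)" "g differentiable (at x)"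
  shows "pd i (\<lambda>y. f y * g y) x = pd i f x * g x + f x * pd i g x"
  using pd_eqI[OF has_derivative_mult[OF assms[unfolded frechet_derivative_works]]]
  by (simp add: pd_def)

(* Isabelle's sqrt is odd, so this also holds where f x < 0: nondegeneracy of g is all that is
   needed below, not positivity of det g. *)
lemma pd_sqrt:
  fixes f :: "real^'n::finite \<Rightarrow> real"
  assumes "f differentiable (at x)" "f x \<noteq> 0"
  shows "pd i (\<lambda>y. sqrt (f y)) x = pd i f x / (2 * sqrt \<bar>f x\<bar>)"
proof -
  have "DERIV sqrt (f x) :> inverse (sqrt \<bar>f x\<bar>) / 2"
    by (rule DERIV_real_sqrt_generic) (use assms(2) in \<open>auto simp: real_sqrt_minus\<close>)
  from pd_eqI[OF has_derivative_compose[OF assms(1)[unfolded frechet_derivative_works]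
      has_field_derivative_imp_has_derivative[OF this]]]
  have "pd i (\<lambda>y. sqrt (f y)) x = inverse (sqrt \<bar>f x\<bar>) * pd i f x / 2"
    by (simp add: pd_def)
  then show ?thesis
    using assms(2) by (simp add: field_simps)
qed

definition cofactor :: "real^'n^'n \<Rightarrow> 'n::finite \<Rightarrow> 'n \<Rightarrow> real" where
  "cofactor A k j = det (\<chi> i. if i = k then axis j 1 else A $ i)"

lemma det_replace_row:
  "det (\<chi> i. if i = k then v else A $ i) = (\<Sum>j\<in>UNIV. v $ j * cofactor A k j)"
proof -
  have "det (\<chi> i. if i = k then v else A $ i)
      = det (\<chi> i. if i = k then (\<Sum>j\<in>UNIV. v $ j *s axis j 1) else A $ i)"
    unfolding basis_expansion ..
  also have "\<dots> = (\<Sum>j\<in>UNIV. v $ j * cofactor A k j)"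
    unfolding det_linear_row_sum[OF finite] det_row_mul cofactor_def ..
  finally show ?thesis .
qed

lemma sum_mult_cofactor:
  "(\<Sum>j\<in>UNIV. A $ m $ j * cofactor A k j) = (if m = k then det A else 0)"
proof -
  have "(\<Sum>j\<in>UNIV. A $ m $ j * cofactor A k j) = det (\<chi> i. if i = k then A $ m else A $ i)"
    by (simp add: det_replace_row)
  also have "\<dots> = (if m = k then det A else 0)"
  proof (cases "m = k")
    case True
    then have "(\<chi> i. if i = k then A $ m else A $ i) = A"
      by (auto simp: vec_eq_iff)
    with True show ?thesis
      by simp
  next
    case False
    then show ?thesis
      by (auto intro: det_identical_rows[of k m] simp: row_def)
  qed
  finally show ?thesis .
qed

lemma det_replace_row_permutations:
  "det (\<chi> i. if i = k then v else A $ i)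
     = (\<Sum>p | p permutes (UNIV::'n::finite set). of_int (sign p) * (v $ p k * (\<Prod>i\<in>UNIV-{k}. A $ i $ p i)))"
  unfolding det_def by (simp add: if_distrib[of "\<lambda>r. r $ _"] prod.delta_remove cong: if_cong)

lemma has_derivative_det:
  fixes M :: "'a::real_normed_vector \<Rightarrow> real^'n::finite^'n"
  assumes "\<And>r c. ((\<lambda>y. M y $ r $ c) has_derivative M' r c) (at x)"
  shows "((\<lambda>y. det (M y)) has_derivative
           (\<lambda>h. \<Sum>k\<in>UNIV. \<Sum>c\<in>UNIV. M' k c h * cofactor (M x) k c)) (at x)"
proof -
  let ?P = "{p. p permutes (UNIV::'n set)}"
  have "((\<lambda>y. det (M y)) has_derivative (\<lambda>h. \<Sum>p\<in>?P. of_int (sign p) *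
          (\<Sum>k\<in>UNIV. M' k (p k) h * (\<Prod>i\<in>UNIV-{k}. M x $ i $ p i)))) (at x)"
    unfolding det_def by (intro has_derivative_sum has_derivative_mult_right has_derivative_prod assms)
  moreover have "(\<Sum>p\<in>?P. of_int (sign p) * (\<Sum>k\<in>UNIV. M' k (p k) h * (\<Prod>i\<in>UNIV-{k}. M x $ i $ p i)))
      = (\<Sum>k\<in>UNIV. \<Sum>c\<in>UNIV. M' k c h * cofactor (M x) k c)" for h
  proof -
    have "(\<Sum>p\<in>?P. of_int (sign p) * (\<Sum>k\<in>UNIV. M' k (p k) h * (\<Prod>i\<in>UNIV-{k}. M x $ i $ p i)))
        = (\<Sum>k\<in>UNIV. det (\<chi> i. if i = k then (\<chi> c. M' k c h) else M x $ i))"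
      unfolding det_replace_row_permutations
      by (simp add: sum_distrib_left sum.swap[of _ ?P])
    then show ?thesis
      by (simp add: det_replace_row)
  qed
  ultimately show ?thesis
    by simp
qed

lemma differentiable_det:
  fixes M :: "'a::real_normed_vector \<Rightarrow> real^'n::finite^'n"
  assumes "\<And>r c. (\<lambda>y. M y $ r $ c) differentiable (at x)"
  shows "(\<lambda>y. det (M y)) differentiable (at x)"
  using has_derivative_det[OF assms[unfolded frechet_derivative_works]] by (rule differentiableI)

lemma differentiable_cofactor:
  fixes M :: "'a::real_normed_vector \<Rightarrow> real^'n::finite^'n"
  assumes "\<And>r c. (\<lambda>y. M y $ r $ c) differentiable (at x)"
  shows "(\<lambda>y. cofactor (M y) k j) differentiable (at x)"
  unfolding cofactor_def
proof (rule differentiable_det)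
  show "(\<lambda>y. (\<chi> i. if i = k then axis j 1 else M y $ i) $ r $ c) differentiable (at x)" for r c
    using assms by (cases "r = k") auto
qed

lemma det_nonzero_if_posdef:
  fixes M :: "'n::finite \<Rightarrow> 'n \<Rightarrow> real"
  assumes "\<And>v::real^'n. v \<noteq> 0 \<Longrightarrow> ev2 M v v > 0"
  shows "det (\<chi> i j. M i j) \<noteq> 0"
proof
  assume "det (\<chi> i j. M i j) = 0"
  then obtain v :: "real^'n" where v: "(\<chi> i j. M i j) *v v = 0" "v \<noteq> 0"
    using matrix_left_invertible_ker invertible_det_nz invertible_left_inverse by metis
  have "ev2 M v v = (\<Sum>i\<in>UNIV. v $ i * ((\<chi> i j. M i j) *v v) $ i)"
    by (simp add: ev2_def matrix_vector_mult_def sum_distrib_left mult_ac)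
  with v assms[OF v(2)] show False
    by simp
qed

lemma right_inverse_imp_left_inverse:
  fixes X Y :: "'n::finite \<Rightarrow> 'n \<Rightarrow> real"
  assumes "\<And>m k. (\<Sum>j\<in>UNIV. X m j * Y j k) = (if m = k then 1 else 0)"
  shows "(\<Sum>j\<in>UNIV. Y m j * X j k) = (if m = k then 1 else 0)"
proof -
  have "(\<chi> i j. X i j) ** (\<chi> i j. Y i j) = mat 1"
    using assms by (simp add: matrix_matrix_mult_def mat_def vec_eq_iff)
  then have "(\<chi> i j. Y i j) ** (\<chi> i j. X i j) = mat 1"
    by (simp add: matrix_left_right_inverse)
  then show ?thesis
    by (simp add: matrix_matrix_mult_def mat_def vec_eq_iff)
qed

definition contract :: "('n::finite \<Rightarrow> 'n \<Rightarrow> real) \<Rightarrow> ('n \<Rightarrow> 'n \<Rightarrow> real) \<Rightarrow> real" where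
  "contract A T = (\<Sum>i\<in>UNIV. \<Sum>j\<in>UNIV. A i j * T i j)"

lemma contract_diff: "contract A (\<lambda>j k. S j k - T j k) = contract A S - contract A T"
  by (simp add: contract_def right_diff_distrib sum_subtractf)

lemma contract_diff_left: "contract (\<lambda>j k. A j k - B j k) T = contract A T - contract B T"
  by (simp add: contract_def left_diff_distrib sum_subtractf)

lemma contract_uminus_left: "contract (\<lambda>j k. - A j k) T = - contract A T"
  by (simp add: contract_def sum_negf)

lemma contract_sum_mult:
  "contract A (\<lambda>j k. \<Sum>l\<in>L. c l * T l j k) = (\<Sum>l\<in>L. c l * contract A (T l))"
  unfolding contract_def sum_distrib_left
  by (subst sum.swap, rule sum.cong[OF refl], subst sum.swap) (simp add: mult_ac)

lemma pd_contract:
  fixes A T :: "real^'m::finite \<Rightarrow> 'n::finite \<Rightarrow> 'n \<Rightarrow> real"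
  assumes "\<And>j k. (\<lambda>y. A y j k) differentiable (at x)" "\<And>j k. (\<lambda>y. T y j k) differentiable (at x)"
  shows "pd i (\<lambda>y. contract (A y) (T y)) x
       = contract (\<lambda>j k. pd i (\<lambda>y. A y j k) x) (T x) + contract (A x) (\<lambda>j k. pd i (\<lambda>y. T y j k) x)"
  unfolding contract_def using assms by (simp add: pd_sum pd_mult sum.distrib)

lemma sum_ev2: "(\<Sum>c\<in>S. ev2 (T c) x y) = ev2 (\<lambda>i j. \<Sum>c\<in>S. T c i j) x y"
  unfolding ev2_def sum_distrib_left
  by (subst sum.swap, rule sum.cong[OF refl], rule sum.swap)

lemma ev4_eq_nested_ev2: "ev4 T w x y z = ev2 (\<lambda>h i. ev2 (T h i) y z) w x"
  by (simp add: ev2_def ev4_def sum_distrib_left mult_ac)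

lemma power2_ev3_eq_nested_ev2:
  "(ev3 T x y z)\<^sup>2 = ev2 (\<lambda>h i. ev2 (\<lambda>m j. ev2 (\<lambda>n k. T h m n * T i j k) z z) y y) x x"
  unfolding power2_eq_square ev3_def sum_product
  by (simp add: ev2_def sum_distrib_left mult_ac)

lemma orthonormal_frame_outer_sum:
  fixes e :: "'n::finite \<Rightarrow> real^'n" and g A :: "'n \<Rightarrow> 'n \<Rightarrow> real"
  assumes orthonormal: "\<And>a b. ev2 g (e a) (e b) = (if a = b then 1 else 0)"
    and inverse: "\<And>m k. (\<Sum>j\<in>UNIV. g m j * A j k) = (if m = k then 1 else 0)"
  shows "(\<Sum>a\<in>UNIV. e a $ i * e a $ j) = A i j"
proof -
  let ?E = "(\<chi> i a. e a $ i) :: real^'n^'n"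
  let ?g = "(\<chi> i j. g i j) :: real^'n^'n"
  let ?A = "(\<chi> i j. A i j) :: real^'n^'n"
  have "(transpose ?E ** ?g ** ?E) $ a $ b = ev2 g (e a) (e b)" for a b
  proof -
    have "(transpose ?E ** ?g ** ?E) $ a $ b = (\<Sum>k\<in>UNIV. \<Sum>l\<in>UNIV. e a $ l * e b $ k * g l k)"
      by (simp add: matrix_matrix_mult_def transpose_def sum_distrib_left mult_ac)
    also have "\<dots> = ev2 g (e a) (e b)"
      unfolding ev2_def by (rule sum.swap)
    finally show ?thesis .
  qed
  then have "transpose ?E ** ?g ** ?E = mat 1"
    using orthonormal by (simp add: vec_eq_iff mat_def)
  then have "?E ** transpose ?E ** ?g = mat 1"
    by (metis matrix_left_right_inverse matrix_mul_assoc)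
  moreover have "?g ** ?A = mat 1"
    using inverse by (simp add: matrix_matrix_mult_def mat_def vec_eq_iff)
  ultimately have "?E ** transpose ?E = ?A"
    by (metis matrix_mul_assoc matrix_mul_lid matrix_mul_rid)
  then show ?thesis
    by (auto simp: vec_eq_iff matrix_matrix_mult_def transpose_def)
qed

lemma sum_ev2_frame:
  assumes "\<And>i j. (\<Sum>a\<in>UNIV. e a $ i * e a $ j) = A i j"
  shows "(\<Sum>a\<in>UNIV. ev2 T (e a) (e a)) = contract A T"
proof -
  have "(\<Sum>a\<in>UNIV. ev2 T (e a) (e a)) = (\<Sum>i\<in>UNIV. \<Sum>j\<in>UNIV. (\<Sum>a\<in>UNIV. e a $ i * e a $ j) * T i j)"
    unfolding ev2_def sum_distrib_right
    by (subst sum.swap, rule sum.cong[OF refl], rule sum.swap)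
  then show ?thesis
    by (simp add: assms contract_def)
qed

lemma statistical_structureD:
  assumes "statistical_structure U G Gam" "y \<in> U"
  shows "open U"
    and "(\<lambda>z. G z j k) differentiable (at y)"
    and "(\<lambda>z. pd i (\<lambda>w. G w j k) z) differentiable (at y)"
    and "(\<lambda>z. Gam z i j k) differentiable (at y)"
    and "G y j k = G y k j"
    and "\<And>v. v \<noteq> 0 \<Longrightarrow> ev2 (G y) v v > 0"
  using assms unfolding statistical_structure_def by auto

definition inverse_metric ::
    "(real^'n \<Rightarrow> 'n::finite \<Rightarrow> 'n \<Rightarrow> real) \<Rightarrow> real^'n \<Rightarrow> 'n \<Rightarrow> 'n \<Rightarrow> real" where
  "inverse_metric G y j k = cofactor (gmat G y) k j / det (gmat G y)"

context
  fixes U :: "(real^'n::finite) set"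
    and G :: "real^'n \<Rightarrow> 'n \<Rightarrow> 'n \<Rightarrow> real"
    and Gam :: "real^'n \<Rightarrow> 'n \<Rightarrow> 'n \<Rightarrow> 'n \<Rightarrow> real"
  assumes statistical: "statistical_structure U G Gam"
begin

lemma det_metric_nonzero: "y \<in> U \<Longrightarrow> det (gmat G y) \<noteq> 0"
  unfolding gmat_def by (rule det_nonzero_if_posdef) (use statistical_structureD[OF statistical] in auto)

lemma metric_mult_inverse:
  "y \<in> U \<Longrightarrow> (\<Sum>j\<in>UNIV. G y m j * inverse_metric G y j k) = (if m = k then 1 else 0)"
  using sum_mult_cofactor[of "gmat G y" m k] det_metric_nonzero
  by (simp add: inverse_metric_def gmat_def sum_divide_distrib[symmetric])

lemma inverse_mult_metric:
  "y \<in> U \<Longrightarrow> (\<Sum>j\<in>UNIV. inverse_metric G y m j * G y j k) = (if m = k then 1 else 0)"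
  by (rule right_inverse_imp_left_inverse) (rule metric_mult_inverse)

lemma inverse_metric_sym:
  assumes "y \<in> U"
  shows "inverse_metric G y j k = inverse_metric G y k j"
proof -
  let ?A = "inverse_metric G y"
  have "?A k j = (\<Sum>n\<in>UNIV. (\<Sum>m\<in>UNIV. G y n m * ?A m k) * ?A n j)"
    by (simp add: metric_mult_inverse[OF assms] if_distrib[of "\<lambda>x. x * _"] cong: if_cong)
  also have "\<dots> = (\<Sum>m\<in>UNIV. ?A m k * (\<Sum>n\<in>UNIV. G y m n * ?A n j))"
    unfolding sum_distrib_left sum_distrib_right
    by (subst sum.swap) (simp add: statistical_structureD(5)[OF statistical assms] mult_ac)
  also have "\<dots> = ?A j k"
    by (simp add: metric_mult_inverse[OF assms] if_distrib[of "\<lambda>x. _ * x"] cong: if_cong)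
  finally show ?thesis ..
qed

lemma contract_lowered_index:
  assumes "y \<in> U"
  shows "contract (inverse_metric G y) (\<lambda>j k. \<Sum>l\<in>UNIV. B j l * G y l k) = (\<Sum>j\<in>UNIV. B j j)"
proof -
  have "contract (inverse_metric G y) (\<lambda>j k. \<Sum>l\<in>UNIV. B j l * G y l k)
      = (\<Sum>j\<in>UNIV. \<Sum>l\<in>UNIV. B j l * (\<Sum>k\<in>UNIV. G y l k * inverse_metric G y k j))"
    unfolding contract_def sum_distrib_left
    by (rule sum.cong[OF refl], subst sum.swap) (simp add: inverse_metric_sym[OF assms] mult_ac)
  then show ?thesis
    by (simp add: metric_mult_inverse[OF assms] if_distrib[of "\<lambda>x. _ * x"] cong: if_cong)
qed

lemma contract_transpose:
  "y \<in> U \<Longrightarrow> contract (inverse_metric G y) (\<lambda>j k. T k j) = contract (inverse_metric G y) T"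
  unfolding contract_def by (subst sum.swap) (simp add: inverse_metric_sym)

lemma differentiable_inverse_metric:
  "y \<in> U \<Longrightarrow> (\<lambda>z. inverse_metric G z j k) differentiable (at y)"
  unfolding inverse_metric_def
  using statistical_structureD(2)[OF statistical] det_metric_nonzero
  by (intro differentiable_divide differentiable_cofactor differentiable_det) (auto simp: gmat_def)

lemma differentiable_nabla_g:
  "y \<in> U \<Longrightarrow> (\<lambda>z. nabla_g G Gam z i j k) differentiable (at y)"
  unfolding nabla_g_def
  using statistical_structureD(2-4)[OF statistical]
  by (intro differentiable_diff differentiable_sum differentiable_mult ballI finite) auto

lemma pd_det_metric:
  assumes "y \<in> U"
  shows "pd i (\<lambda>z. det (gmat G z)) y
       = det (gmat G y) * contract (inverse_metric G y) (\<lambda>j k. pd i (\<lambda>z. G z j k) y)"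
proof -
  have "((\<lambda>z. det (gmat G z)) has_derivative
      (\<lambda>v. \<Sum>k\<in>UNIV. \<Sum>c\<in>UNIV.
          frechet_derivative (\<lambda>z. G z k c) (at y) v * cofactor (gmat G y) k c)) (at y)"
    by (rule has_derivative_det)
      (use statistical_structureD(2)[OF statistical assms]
        in \<open>simp add: gmat_def frechet_derivative_works\<close>)
  then have "pd i (\<lambda>z. det (gmat G z)) y
      = (\<Sum>k\<in>UNIV. \<Sum>c\<in>UNIV. pd i (\<lambda>z. G z k c) y * cofactor (gmat G y) k c)"
    by (subst pd_eqI) (simp_all add: pd_def)
  also have "\<dots> = det (gmat G y) * (\<Sum>k\<in>UNIV. \<Sum>c\<in>UNIV. inverse_metric G y k c * pd i (\<lambda>z. G z k c) y)"
    using det_metric_nonzero[OF assms] inverse_metric_sym[OF assms]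
    by (simp add: inverse_metric_def sum_distrib_left mult_ac)
  finally show ?thesis
    by (simp add: contract_def)
qed

lemma pd_inverse_metric:
  assumes "y \<in> U"
  shows "pd h (\<lambda>z. inverse_metric G z j k) y
       = - (\<Sum>m\<in>UNIV. \<Sum>n\<in>UNIV. inverse_metric G y j m * pd h (\<lambda>z. G z m n) y * inverse_metric G y n k)"
proof -
  let ?A = "inverse_metric G y" and ?dA = "\<lambda>n k. pd h (\<lambda>z. inverse_metric G z n k) y"
    and ?dG = "\<lambda>m n. pd h (\<lambda>z. G z m n) y"
  have diff: "(\<lambda>z. G z m n) differentiable (at y)" "(\<lambda>z. inverse_metric G z m n) differentiable (at y)" for m n
    using statistical_structureD(2)[OF statistical assms] differentiable_inverse_metric[OF assms] by auto
  have "pd h (\<lambda>z. \<Sum>n\<in>UNIV. G z m n * inverse_metric G z n k) y = 0" for m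
    using statistical_structureD(1)[OF statistical assms] assms
    by (rule pd_locally_const) (rule metric_mult_inverse)
  then have product_rule: "(\<Sum>n\<in>UNIV. G y m n * ?dA n k) = - (\<Sum>n\<in>UNIV. ?dG m n * ?A n k)" for m
    by (simp add: pd_sum pd_mult diff sum.distrib eq_neg_iff_add_eq_0 add.commute)
  have "?dA j k = (\<Sum>n\<in>UNIV. (\<Sum>m\<in>UNIV. ?A j m * G y m n) * ?dA n k)"
    by (simp add: inverse_mult_metric[OF assms] if_distrib[of "\<lambda>x. x * _"] cong: if_cong)
  also have "\<dots> = (\<Sum>m\<in>UNIV. ?A j m * (\<Sum>n\<in>UNIV. G y m n * ?dA n k))"
    unfolding sum_distrib_left sum_distrib_right
    by (subst sum.swap) (simp add: mult_ac)
  also have "\<dots> = - (\<Sum>m\<in>UNIV. \<Sum>n\<in>UNIV. ?A j m * ?dG m n * ?A n k)"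
    by (simp add: product_rule sum_distrib_left sum_negf mult_ac)
  finally show ?thesis .
qed

(* Coordinate form of nabla_h g^-1 = - g^-1 (nabla_h g) g^-1. *)
lemma pd_inverse_metric_nabla:
  assumes "y \<in> U"
  shows "pd h (\<lambda>z. inverse_metric G z j k) y
       = - (\<Sum>m\<in>UNIV. \<Sum>n\<in>UNIV. inverse_metric G y j m * nabla_g G Gam y h m n * inverse_metric G y n k)
         - (\<Sum>m\<in>UNIV. inverse_metric G y m k * Gam y h m j)
         - (\<Sum>m\<in>UNIV. inverse_metric G y j m * Gam y h m k)"
proof -
  let ?A = "inverse_metric G y" and ?C = "nabla_g G Gam y h" and ?\<Gamma> = "Gam y h"
  have lowered: "(\<Sum>m\<in>UNIV. \<Sum>n\<in>UNIV. ?A j m * (\<Sum>l\<in>UNIV. ?\<Gamma> m l * G y l n) * ?A n k)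
      = (\<Sum>m\<in>UNIV. ?A j m * ?\<Gamma> m k)"
  proof -
    have "(\<Sum>m\<in>UNIV. \<Sum>n\<in>UNIV. ?A j m * (\<Sum>l\<in>UNIV. ?\<Gamma> m l * G y l n) * ?A n k)
        = (\<Sum>m\<in>UNIV. ?A j m * (\<Sum>l\<in>UNIV. ?\<Gamma> m l * (\<Sum>n\<in>UNIV. G y l n * ?A n k)))"
      unfolding sum_distrib_left sum_distrib_right
      by (rule sum.cong[OF refl], subst sum.swap) (simp add: mult_ac)
    then show ?thesis
      by (simp add: metric_mult_inverse[OF assms] if_distrib[of "\<lambda>x. _ * x"] cong: if_cong)
  qed
  have raised: "(\<Sum>m\<in>UNIV. \<Sum>n\<in>UNIV. ?A j m * (\<Sum>l\<in>UNIV. ?\<Gamma> n l * G y m l) * ?A n k)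
      = (\<Sum>n\<in>UNIV. ?A n k * ?\<Gamma> n j)"
  proof -
    have "(\<Sum>m\<in>UNIV. \<Sum>n\<in>UNIV. ?A j m * (\<Sum>l\<in>UNIV. ?\<Gamma> n l * G y m l) * ?A n k)
        = (\<Sum>n\<in>UNIV. ?A n k * (\<Sum>l\<in>UNIV. ?\<Gamma> n l * (\<Sum>m\<in>UNIV. ?A j m * G y m l)))"
      unfolding sum_distrib_left sum_distrib_right
      by (subst sum.swap, rule sum.cong[OF refl], subst sum.swap) (simp add: mult_ac)
    then show ?thesis
      by (simp add: inverse_mult_metric[OF assms] if_distrib[of "\<lambda>x. _ * x"] cong: if_cong)
  qed
  have "pd h (\<lambda>z. G z m n) y
      = ?C m n + (\<Sum>l\<in>UNIV. ?\<Gamma> m l * G y l n) + (\<Sum>l\<in>UNIV. ?\<Gamma> n l * G y m l)" for m n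
    by (simp add: nabla_g_def)
  then show ?thesis
    unfolding pd_inverse_metric[OF assms]
    by (simp add: distrib_left distrib_right sum.distrib lowered raised)
qed

lemma contract_pd_inverse_metric:
  assumes "y \<in> U"
  shows "contract (\<lambda>j k. pd h (\<lambda>z. inverse_metric G z j k) y) T
       = - contract (inverse_metric G y)
             (\<lambda>m j. contract (inverse_metric G y) (\<lambda>n k. nabla_g G Gam y h m n * T j k))
         - contract (inverse_metric G y) (\<lambda>j k. \<Sum>l\<in>UNIV. Gam y h j l * T l k)
         - contract (inverse_metric G y) (\<lambda>j k. \<Sum>l\<in>UNIV. Gam y h k l * T j l)"
proof -
  let ?A = "inverse_metric G y" and ?C = "nabla_g G Gam y h" and ?\<Gamma> = "Gam y h"
  have quadratic: "contract (\<lambda>j k. \<Sum>m\<in>UNIV. \<Sum>n\<in>UNIV. ?A j m * ?C m n * ?A n k) T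
      = contract ?A (\<lambda>m j. contract ?A (\<lambda>n k. ?C m n * T j k))"
  proof -
    have "contract (\<lambda>j k. \<Sum>m\<in>UNIV. \<Sum>n\<in>UNIV. ?A j m * ?C m n * ?A n k) T
        = (\<Sum>j\<in>UNIV. \<Sum>m\<in>UNIV. \<Sum>n\<in>UNIV. \<Sum>k\<in>UNIV. ?A j m * ?C m n * ?A n k * T j k)"
      unfolding contract_def sum_distrib_right
      by (rule sum.cong[OF refl], subst sum.swap, rule sum.cong[OF refl], rule sum.swap)
    also have "\<dots> = (\<Sum>m\<in>UNIV. \<Sum>j\<in>UNIV. \<Sum>n\<in>UNIV. \<Sum>k\<in>UNIV. ?A j m * ?C m n * ?A n k * T j k)"
      by (rule sum.swap)
    also have "\<dots> = contract ?A (\<lambda>m j. contract ?A (\<lambda>n k. ?C m n * T j k))"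
      unfolding contract_def sum_distrib_left
      by (simp add: inverse_metric_sym[OF assms] mult_ac)
    finally show ?thesis .
  qed
  have raised: "contract (\<lambda>j k. \<Sum>m\<in>UNIV. ?A m k * ?\<Gamma> m j) T
      = contract ?A (\<lambda>j k. \<Sum>l\<in>UNIV. ?\<Gamma> j l * T l k)"
  proof -
    have "contract (\<lambda>j k. \<Sum>m\<in>UNIV. ?A m k * ?\<Gamma> m j) T
        = (\<Sum>k\<in>UNIV. \<Sum>m\<in>UNIV. \<Sum>j\<in>UNIV. ?A m k * ?\<Gamma> m j * T j k)"
      unfolding contract_def sum_distrib_right
      by (subst sum.swap, rule sum.cong[OF refl], rule sum.swap)
    also have "\<dots> = contract ?A (\<lambda>j k. \<Sum>l\<in>UNIV. ?\<Gamma> j l * T l k)"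
      unfolding contract_def sum_distrib_left
      by (subst sum.swap) (simp add: mult_ac)
    finally show ?thesis .
  qed
  have lowered: "contract (\<lambda>j k. \<Sum>m\<in>UNIV. ?A j m * ?\<Gamma> m k) T
      = contract ?A (\<lambda>j k. \<Sum>l\<in>UNIV. ?\<Gamma> k l * T j l)"
    unfolding contract_def sum_distrib_right sum_distrib_left
    by (rule sum.cong[OF refl], subst sum.swap) (simp add: mult_ac)
  show ?thesis
    unfolding pd_inverse_metric_nabla[OF assms] contract_diff_left contract_uminus_left
      quadratic raised lowered ..
qed

context
  assumes trace_free: "trace_free U G Gam"
begin

lemma trace_pd_metric:
  assumes "y \<in> U"
  shows "contract (inverse_metric G y) (\<lambda>j k. pd i (\<lambda>z. G z j k) y) = 2 * (\<Sum>l\<in>UNIV. Gam y i l l)"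
proof -
  define D where "D = det (gmat G y)"
  define T where "T = contract (inverse_metric G y) (\<lambda>j k. pd i (\<lambda>z. G z j k) y)"
  have "D \<noteq> 0"
    unfolding D_def by (rule det_metric_nonzero[OF assms])
  have "(\<lambda>z. det (gmat G z)) differentiable (at y)"
    by (rule differentiable_det) (simp add: gmat_def statistical_structureD(2)[OF statistical assms])
  then have "pd i (\<lambda>z. sqrt (det (gmat G z))) y = D * T / (2 * sqrt \<bar>D\<bar>)"
    using \<open>D \<noteq> 0\<close> by (simp add: pd_sqrt pd_det_metric[OF assms] D_def T_def)
  moreover have "pd i (\<lambda>z. sqrt (det (gmat G z))) y = sqrt D * (\<Sum>l\<in>UNIV. Gam y i l l)"
    using trace_free assms unfolding trace_free_def vol_density_def[abs_def] D_def by simp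
  ultimately have "D * T = 2 * (sqrt \<bar>D\<bar> * sqrt D) * (\<Sum>l\<in>UNIV. Gam y i l l)"
    using \<open>D \<noteq> 0\<close> by (simp add: field_simps)
  also have "sqrt \<bar>D\<bar> * sqrt D = D"
    by (cases "D \<ge> 0") (simp_all add: real_sqrt_minus real_sqrt_mult_self)
  finally show ?thesis
    using \<open>D \<noteq> 0\<close> unfolding T_def by simp
qed

lemma trace_nabla_g:
  assumes "y \<in> U"
  shows "contract (inverse_metric G y) (nabla_g G Gam y i) = 0"
proof -
  let ?A = "inverse_metric G y"
  have "contract ?A (\<lambda>j k. \<Sum>l\<in>UNIV. Gam y i k l * G y j l)
      = contract ?A (\<lambda>j k. \<Sum>l\<in>UNIV. Gam y i j l * G y l k)"
    using contract_transpose[OF assms, of "\<lambda>j k. \<Sum>l\<in>UNIV. Gam y i j l * G y l k"]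
    by (simp add: statistical_structureD(5)[OF statistical assms])
  then have "contract ?A (nabla_g G Gam y i)
      = contract ?A (\<lambda>j k. pd i (\<lambda>z. G z j k) y) - 2 * (\<Sum>j\<in>UNIV. Gam y i j j)"
    unfolding nabla_g_def[abs_def] contract_diff
    by (simp add: contract_lowered_index[OF assms])
  then show ?thesis
    by (simp add: trace_pd_metric[OF assms])
qed

lemma contract_nabla2_g:
  assumes "p \<in> U"
  shows "contract (inverse_metric G p) (nabla2_g G Gam p h i)
       = contract (inverse_metric G p)
           (\<lambda>m j. contract (inverse_metric G p) (\<lambda>n k. nabla_g G Gam p h m n * nabla_g G Gam p i j k))"
proof -
  have "pd h (\<lambda>z. contract (inverse_metric G z) (nabla_g G Gam z i)) p = 0"
    using statistical_structureD(1)[OF statistical assms] assms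
    by (rule pd_locally_const) (rule trace_nabla_g)
  then have "contract (inverse_metric G p) (\<lambda>j k. pd h (\<lambda>z. nabla_g G Gam z i j k) p)
      = - contract (\<lambda>j k. pd h (\<lambda>z. inverse_metric G z j k) p) (nabla_g G Gam p i)"
    by (simp add: pd_contract differentiable_inverse_metric differentiable_nabla_g assms
        eq_neg_iff_add_eq_0 add.commute)
  then show ?thesis
    unfolding nabla2_g_def[abs_def] contract_diff contract_sum_mult
    by (simp add: contract_pd_inverse_metric trace_nabla_g assms)
qed

end

end

theorem proposition11p2:
  fixes U :: "(real^'n::finite) set"
    and G :: "real^'n \<Rightarrow> 'n \<Rightarrow> 'n \<Rightarrow> real"
    and Gam :: "real^'n \<Rightarrow> 'n \<Rightarrow> 'n \<Rightarrow> 'n \<Rightarrow> real"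
    and p :: "real^'n"
    and e :: "'n \<Rightarrow> real^'n"
  assumes "statistical_structure U G Gam"
    and "trace_free U G Gam"
    and "p \<in> U"
    and "\<forall>a b. ev2 (G p) (e a) (e b) = (if a = b then 1 else 0)"
  shows "(\<Sum>a\<in>UNIV. \<Sum>b\<in>UNIV. ev4 (nabla2_g G Gam p) (e a) (e a) (e b) (e b))
       = (\<Sum>a\<in>UNIV. \<Sum>b\<in>UNIV. \<Sum>c\<in>UNIV. (ev3 (nabla_g G Gam p) (e a) (e b) (e c))^2)"
proof -
  let ?A = "inverse_metric G p" and ?C = "nabla_g G Gam p"
  have frame_trace: "(\<Sum>a\<in>UNIV. ev2 T (e a) (e a)) = contract ?A T" for T
    by (rule sum_ev2_frame[OF orthonormal_frame_outer_sum[of "G p"]])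
      (use assms(4) metric_mult_inverse[OF assms(1,3)] in auto)
  have "(\<Sum>a\<in>UNIV. \<Sum>b\<in>UNIV. ev4 (nabla2_g G Gam p) (e a) (e a) (e b) (e b))
      = contract ?A (\<lambda>h i. contract ?A (nabla2_g G Gam p h i))"
    by (simp add: ev4_eq_nested_ev2 sum_ev2 frame_trace)
  also have "\<dots> = contract ?A (\<lambda>h i. contract ?A (\<lambda>m j. contract ?A (\<lambda>n k. ?C h m n * ?C i j k)))"
    by (simp add: contract_nabla2_g[OF assms(1-3)])
  also have "\<dots> = (\<Sum>a\<in>UNIV. \<Sum>b\<in>UNIV. \<Sum>c\<in>UNIV. (ev3 ?C (e a) (e b) (e c))^2)"
    by (simp add: power2_ev3_eq_nested_ev2 sum_ev2 frame_trace)
  finally show ?thesis .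
qed

end
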